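(* Let $X$ be a finite 2-covered graph of spaces. Then $\chi(\Gamma(X))\le\chi(\Gamma_U(X))$.
   Context: A 2-covered graph of spaces $X$ consists of: a finite connected graph $\Gamma_U(X)$ (the underlying graph), with oriented edges $e$, reversal $\bar e$, and terminal/initial vertices $\tau(e),\iota(e)=\tau(\bar e)$; for each vertex $v$ a finite connected graph $V$ (vertex space); for each edge $e$ a finite connected graph $E=\bar E$ (edge space, possibly a single point); and for each oriented edge $e$ a combinatorial immersion (locally injective graph map) $\tau_e\colon E\looparrowright V$ where $v=\tau(e)$; subject to the 2-covering condition: for each vertex $v$, every edge of $V$ is the image of exactly two edges of $\bigsqcup_{\tau(e)=v}E$. The horizontal subgraph $\Gamma(X)$ is the graph whose vertices are the vertices of all vertex spaces and with one edge for each edge $e$ of $\Gamma_U(X)$ and each vertex $x$ of $E$, joining $\tau_{\bar e}(x)$ to $\tau_e(x)$. $\chi$ denotes Euler characteristic. *)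

theory Defs
  imports Main
begin

text \<open>Graphs in the sense of Serre: a set of vertices, a set of oriented edges,
  an initial-vertex map and a fixed-point-free involution (edge reversal).
  Loops and multiple edges are allowed.\<close>

record ('v, 'e) sgraph =
  verts :: "'v set"
  arcs  :: "'e set"
  init  :: "'e \<Rightarrow> 'v"
  rev   :: "'e \<Rightarrow> 'e"

definition tgt :: "('v, 'e) sgraph \<Rightarrow> 'e \<Rightarrow> 'v" where
  "tgt G a = init G (rev G a)"

definition fin_graph :: "('v, 'e) sgraph \<Rightarrow> bool" where
  "fin_graph G \<longleftrightarrow> finite (verts G) \<and> finite (arcs G) \<and>
     (\<forall>a\<in>arcs G. init G a \<in> verts G \<and> rev G a \<in> arcs G \<and>
                 rev G a \<noteq> a \<and> rev G (rev G a) = a)"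

definition adj_rel :: "('v, 'e) sgraph \<Rightarrow> ('v \<times> 'v) set" where
  "adj_rel G = {(init G a, tgt G a) | a. a \<in> arcs G}"

definition connected_graph :: "('v, 'e) sgraph \<Rightarrow> bool" where
  "connected_graph G \<longleftrightarrow> verts G \<noteq> {} \<and>
     (\<forall>x\<in>verts G. \<forall>y\<in>verts G. (x, y) \<in> (adj_rel G)\<^sup>*)"

definition unoriented_edges :: "('v, 'e) sgraph \<Rightarrow> 'e set set" where
  "unoriented_edges G = {{a, rev G a} | a. a \<in> arcs G}"

definition euler_char :: "('v, 'e) sgraph \<Rightarrow> int" where
  "euler_char G = int (card (verts G)) - int (card (unoriented_edges G))"

definition graph_map :: "('a, 'b) sgraph \<Rightarrow> ('c, 'd) sgraph \<Rightarrow>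
    ('a \<Rightarrow> 'c) \<Rightarrow> ('b \<Rightarrow> 'd) \<Rightarrow> bool" where
  "graph_map G H fv fe \<longleftrightarrow>
     (\<forall>x\<in>verts G. fv x \<in> verts H) \<and>
     (\<forall>a\<in>arcs G. fe a \<in> arcs H \<and> fv (init G a) = init H (fe a) \<and>
                 fe (rev G a) = rev H (fe a))"

definition immersion :: "('a, 'b) sgraph \<Rightarrow> ('c, 'd) sgraph \<Rightarrow>
    ('a \<Rightarrow> 'c) \<Rightarrow> ('b \<Rightarrow> 'd) \<Rightarrow> bool" where
  "immersion G H fv fe \<longleftrightarrow> graph_map G H fv fe \<and>
     (\<forall>x\<in>verts G. inj_on fe {a \<in> arcs G. init G a = x})"

text \<open>A finite 2-covered graph of spaces: underlying graph U, vertex spaces Vs v,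
  edge spaces Es e (with Es (rev e) = Es e), and for each oriented edge e an
  immersion (tv e, te e) : Es e \<rightarrow> Vs (tgt U e).\<close>
definition two_covered_gos ::
  "('v, 'e) sgraph \<Rightarrow> ('v \<Rightarrow> ('a, 'b) sgraph) \<Rightarrow> ('e \<Rightarrow> ('c, 'd) sgraph) \<Rightarrow>
   ('e \<Rightarrow> 'c \<Rightarrow> 'a) \<Rightarrow> ('e \<Rightarrow> 'd \<Rightarrow> 'b) \<Rightarrow> bool" where
  "two_covered_gos U Vs Es tv te \<longleftrightarrow>
     fin_graph U \<and> connected_graph U \<and>
     (\<forall>v\<in>verts U. fin_graph (Vs v) \<and> connected_graph (Vs v)) \<and>
     (\<forall>e\<in>arcs U. fin_graph (Es e) \<and> connected_graph (Es e) \<and>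
                 Es (rev U e) = Es e \<and>
                 immersion (Es e) (Vs (tgt U e)) (tv e) (te e)) \<and>
     (\<forall>v\<in>verts U. \<forall>b\<in>arcs (Vs v).
        card {(e, d). e \<in> arcs U \<and> tgt U e = v \<and> d \<in> arcs (Es e) \<and> te e d = b} = 2)"

definition horizontal ::
  "('v, 'e) sgraph \<Rightarrow> ('v \<Rightarrow> ('a, 'b) sgraph) \<Rightarrow> ('e \<Rightarrow> ('c, 'd) sgraph) \<Rightarrow>
   ('e \<Rightarrow> 'c \<Rightarrow> 'a) \<Rightarrow> ('v \<times> 'a, 'e \<times> 'c) sgraph" where
  "horizontal U Vs Es tv =
     \<lparr> verts = Sigma (verts U) (\<lambda>v. verts (Vs v)),
       arcs = Sigma (arcs U) (\<lambda>e. verts (Es e)),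
       init = (\<lambda>(e, x). (init U e, tv (rev U e) x)),
       rev = (\<lambda>(e, x). (rev U e, x)) \<rparr>"

end

theory Submission
  imports Defs
begin

text \<open>Doubling both Euler characteristics and grouping by the vertices v of the underlying
  graph, it suffices to show 2(|V| - 1) \<le> \<Sum> (|E| - 1), summed over the edge spaces E
  incoming at v. A spanning tree of the vertex space V has |V| - 1 edges, each covered by
  exactly two edges of these E. Orient the tree towards a root: as the E are immersed, a
  covering edge is determined by its initial vertex, and that vertex is never the vertex of
  its E closest to the root.\<close>

lemma card_unoriented_edges:
  assumes fin: "finite (arcs G)"
    and inv: "\<forall>a\<in>arcs G. rev G a \<in> arcs G \<and> rev G a \<noteq> a \<and> rev G (rev G a) = a"
  shows "2 * card (unoriented_edges G) = card (arcs G)"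
proof -
  let ?C = "unoriented_edges G"
  have C: "?C = (\<lambda>a. {a, rev G a}) ` arcs G"
    unfolding unoriented_edges_def by auto
  have union: "\<Union>?C = arcs G" using inv unfolding C by auto
  have "2 * card ?C = card (\<Union>?C)"
  proof (rule card_partition)
    show "finite ?C" unfolding C using fin by simp
    show "finite (\<Union>?C)" using union fin by simp
    show "\<And>c. c \<in> ?C \<Longrightarrow> card c = 2" unfolding C using inv by auto
    show "\<And>c1 c2. c1 \<in> ?C \<Longrightarrow> c2 \<in> ?C \<Longrightarrow> c1 \<noteq> c2 \<Longrightarrow> c1 \<inter> c2 = {}"
      unfolding C using inv by auto metis+
  qed
  then show ?thesis using union by simp
qed

lemma euler_char_double:
  assumes "fin_graph G"
  shows "2 * euler_char G = 2 * int (card (verts G)) - int (card (arcs G))"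
proof -
  have "2 * card (unoriented_edges G) = card (arcs G)"
    using assms card_unoriented_edges unfolding fin_graph_def by blast
  then have "2 * int (card (unoriented_edges G)) = int (card (arcs G))"
    by (metis of_nat_mult of_nat_numeral)
  then show ?thesis unfolding euler_char_def by (simp add: right_diff_distrib)
qed

lemma fin_graph_tgt:
  assumes "fin_graph G" "a \<in> arcs G"
  shows "tgt G a \<in> verts G"
  using assms unfolding fin_graph_def tgt_def by auto

definition in_arcs :: "('v, 'e) sgraph \<Rightarrow> 'v \<Rightarrow> 'e set" where
  "in_arcs G v = {a \<in> arcs G. tgt G a = v}"

lemma sum_arcs_by_tgt:
  assumes "fin_graph G"
  shows "(\<Sum>a\<in>arcs G. f a) = (\<Sum>v\<in>verts G. \<Sum>a\<in>in_arcs G v. f a)"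
  using sum.group[of "arcs G" "verts G" "tgt G" f] assms fin_graph_tgt[OF assms]
  unfolding in_arcs_def fin_graph_def by (auto simp: image_subset_iff)

lemma card_vimage_constant_fibres:
  assumes "finite A" "finite B" "\<And>b. b \<in> B \<Longrightarrow> card {a \<in> A. f a = b} = k"
  shows "card {a \<in> A. f a \<in> B} = k * card B"
proof -
  have "{a \<in> A. f a \<in> B} = (\<Union>b\<in>B. {a \<in> A. f a = b})" by auto
  then have "card {a \<in> A. f a \<in> B} = (\<Sum>b\<in>B. card {a \<in> A. f a = b})"
    using assms(1,2) by (simp add: card_UN_disjoint disjoint_iff)
  then show ?thesis using assms(3) by simp
qed

definition descending_arcs ::
  "('v, 'e) sgraph \<Rightarrow> ('v \<Rightarrow> nat) \<Rightarrow> 'v set \<Rightarrow> ('v \<Rightarrow> 'e) \<Rightarrow> bool" where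
  "descending_arcs G h X t \<longleftrightarrow>
     (\<forall>x\<in>X. t x \<in> arcs G \<and> init G (t x) = x \<and> h (tgt G (t x)) < h x)"

lemma connected_graph_descending_arcs:
  assumes conn: "connected_graph G" and r: "r \<in> verts G"
  obtains h t where "descending_arcs G h (verts G - {r}) t"
proof -
  define R where "R = adj_rel G"
  define h where "h x = (LEAST n. (x, r) \<in> R ^^ n)" for x
  have "\<exists>a. a \<in> arcs G \<and> init G a = x \<and> h (tgt G a) < h x" if x: "x \<in> verts G - {r}" for x
  proof -
    have "(x, r) \<in> R\<^sup>*" using conn x r unfolding connected_graph_def R_def by auto
    then obtain n where "(x, r) \<in> R ^^ n" using rtrancl_power by blast
    then have xr: "(x, r) \<in> R ^^ h x" unfolding h_def by (rule LeastI)
    with x have "h x \<noteq> 0" by (metis DiffD2 relpow_0_E singletonI)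
    then obtain m where m: "h x = Suc m" using not0_implies_Suc by blast
    then obtain y where y: "(x, y) \<in> R" "(y, r) \<in> R ^^ m" using xr relpow_Suc_D2 by metis
    have "h y \<le> m" unfolding h_def using y(2) by (rule Least_le)
    moreover obtain a where "a \<in> arcs G" "init G a = x" "tgt G a = y"
      using y(1) unfolding R_def adj_rel_def by auto
    ultimately show ?thesis using m by auto
  qed
  then obtain t where
    "\<forall>x\<in>verts G - {r}. t x \<in> arcs G \<and> init G (t x) = x \<and> h (tgt G (t x)) < h x"
    by metis
  then show thesis using that unfolding descending_arcs_def by blast
qed

lemma immersion_card_arcs_over_descending_less:
  assumes imm: "immersion E G fv fe" and fE: "fin_graph E" and ne: "verts E \<noteq> {}"
    and desc: "descending_arcs G h X t"
  shows "card {d \<in> arcs E. fe d \<in> t ` X} < card (verts E)"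
proof -
  let ?D = "{d \<in> arcs E. fe d \<in> t ` X}"
  obtain y0 where y0: "y0 \<in> verts E"
    and y0_min: "\<And>y. y \<in> verts E \<Longrightarrow> h (fv y0) \<le> h (fv y)"
    using ex_has_least_nat[of "\<lambda>y. y \<in> verts E" _ "\<lambda>y. h (fv y)"] ne by blast
  have gm: "graph_map E G fv fe" using imm unfolding immersion_def by simp
  have over: "fv (init E d) = x \<and> h (fv (init E (rev E d))) < h x"
    if d: "d \<in> arcs E" and x: "x \<in> X" "fe d = t x" for d x
  proof -
    have "rev E d \<in> arcs E" using fE d unfolding fin_graph_def by auto
    then have "fv (init E (rev E d)) = init G (rev G (fe d))"
      using gm d unfolding graph_map_def by auto
    then show ?thesis using gm d x desc unfolding graph_map_def descending_arcs_def tgt_def by auto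
  qed
  have "inj_on (init E) ?D"
  proof (rule inj_onI)
    fix d d' assume d: "d \<in> ?D" and d': "d' \<in> ?D" and same: "init E d = init E d'"
    then have "fe d = fe d'" using over by (metis (no_types, lifting) image_iff mem_Collect_eq)
    moreover have "init E d \<in> verts E" using fE d unfolding fin_graph_def by auto
    ultimately show "d = d'"
      using imm d d' same unfolding immersion_def by (auto dest: inj_onD)
  qed
  moreover have "init E ` ?D \<subseteq> verts E - {y0}"
  proof
    fix z assume "z \<in> init E ` ?D"
    then obtain d x where "d \<in> arcs E" "x \<in> X" "fe d = t x" "z = init E d" by auto
    moreover from this have "init E (rev E d) \<in> verts E" using fE unfolding fin_graph_def by auto
    ultimately show "z \<in> verts E - {y0}" using over y0_min fE unfolding fin_graph_def by fastforce
  qed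
  moreover have "finite (verts E)" using fE unfolding fin_graph_def by simp
  ultimately have "card ?D \<le> card (verts E - {y0})" by (metis card_inj_on_le finite_Diff)
  also have "\<dots> < card (verts E)" using y0 \<open>finite (verts E)\<close> by (meson card_Diff1_less)
  finally show ?thesis .
qed

lemma immersed_double_cover_bound:
  assumes fV: "fin_graph V" and cV: "connected_graph V" and fI: "finite I"
    and hE: "\<And>e. e \<in> I \<Longrightarrow>
               fin_graph (Es e) \<and> verts (Es e) \<noteq> {} \<and> immersion (Es e) V (tv e) (te e)"
    and cov: "\<And>b. b \<in> arcs V \<Longrightarrow>
               card {(e, d). e \<in> I \<and> d \<in> arcs (Es e) \<and> te e d = b} = 2"
  shows "2 * int (card (verts V)) - (\<Sum>e\<in>I. int (card (verts (Es e)))) \<le> 2 - int (card I)"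
proof -
  obtain r where r: "r \<in> verts V" using cV unfolding connected_graph_def by auto
  obtain h t where desc: "descending_arcs V h (verts V - {r}) t"
    using connected_graph_descending_arcs[OF cV r] .
  define T where "T = t ` (verts V - {r})"
  define A where "A = Sigma I (\<lambda>e. arcs (Es e))"
  have finV: "finite (verts V)" using fV unfolding fin_graph_def by simp
  have "inj_on t (verts V - {r})"
    using desc unfolding descending_arcs_def by (metis inj_onI)
  then have card_T: "card T = card (verts V) - 1"
    unfolding T_def using r finV by (simp add: card_image)
  have finA: "finite A" unfolding A_def using fI hE unfolding fin_graph_def by auto
  have "card {p \<in> A. case_prod te p \<in> T} = 2 * card T"
  proof (rule card_vimage_constant_fibres[OF finA])
    show "finite T" unfolding T_def using finV by simp
    fix b assume "b \<in> T"
    then have "b \<in> arcs V" using desc unfolding T_def descending_arcs_def by auto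
    moreover have "{p \<in> A. case_prod te p = b} =
        {(e, d). e \<in> I \<and> d \<in> arcs (Es e) \<and> te e d = b}"
      unfolding A_def by auto
    ultimately show "card {p \<in> A. case_prod te p = b} = 2" using cov by simp
  qed
  also have "{p \<in> A. case_prod te p \<in> T} = Sigma I (\<lambda>e. {d \<in> arcs (Es e). te e d \<in> T})"
    unfolding A_def by auto
  also have "card \<dots> = (\<Sum>e\<in>I. card {d \<in> arcs (Es e). te e d \<in> T})"
    using fI hE unfolding fin_graph_def by simp
  finally have "2 * int (card T) = (\<Sum>e\<in>I. int (card {d \<in> arcs (Es e). te e d \<in> T}))"
    by (simp add: of_nat_sum[symmetric])
  also have "\<dots> \<le> (\<Sum>e\<in>I. int (card (verts (Es e))) - 1)"
  proof (rule sum_mono)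
    fix e assume "e \<in> I"
    then have "card {d \<in> arcs (Es e). te e d \<in> T} < card (verts (Es e))"
      unfolding T_def using hE desc by (blast intro: immersion_card_arcs_over_descending_less)
    then show "int (card {d \<in> arcs (Es e). te e d \<in> T}) \<le> int (card (verts (Es e))) - 1"
      by linarith
  qed
  also have "\<dots> = (\<Sum>e\<in>I. int (card (verts (Es e)))) - int (card I)"
    by (simp add: sum_subtractf)
  finally show ?thesis using card_T r finV card_gt_0_iff[of "verts V"] by linarith
qed

lemma fin_graph_horizontal:
  assumes "two_covered_gos U Vs Es tv te"
  shows "fin_graph (horizontal U Vs Es tv)"
proof -
  have fU: "fin_graph U" and hV: "\<forall>v\<in>verts U. fin_graph (Vs v)"
    and hE: "\<forall>e\<in>arcs U. fin_graph (Es e) \<and> Es (rev U e) = Es e \<and>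
               immersion (Es e) (Vs (tgt U e)) (tv e) (te e)"
    using assms unfolding two_covered_gos_def by auto
  have "tv (rev U e) x \<in> verts (Vs (init U e))" if "e \<in> arcs U" "x \<in> verts (Es e)" for e x
  proof -
    have "rev U e \<in> arcs U" "tgt U (rev U e) = init U e"
      using fU that unfolding fin_graph_def tgt_def by auto
    then show ?thesis
      using hE that unfolding immersion_def graph_map_def by metis
  qed
  then show ?thesis
    using fU hV hE unfolding fin_graph_def horizontal_def by auto
qed

lemma two_covered_gos_vertex_bound:
  assumes gos: "two_covered_gos U Vs Es tv te" and v: "v \<in> verts U"
  shows "2 * int (card (verts (Vs v))) - (\<Sum>e\<in>in_arcs U v. int (card (verts (Es e))))
           \<le> 2 - int (card (in_arcs U v))"
proof (rule immersed_double_cover_bound[where te = te])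
  show "fin_graph (Vs v)" "connected_graph (Vs v)"
    using gos v unfolding two_covered_gos_def by auto
  show "finite (in_arcs U v)"
    using gos unfolding two_covered_gos_def fin_graph_def in_arcs_def by auto
  show "fin_graph (Es e) \<and> verts (Es e) \<noteq> {} \<and> immersion (Es e) (Vs v) (tv e) (te e)"
    if "e \<in> in_arcs U v" for e
    using gos that unfolding two_covered_gos_def in_arcs_def connected_graph_def by auto
  show "card {(e, d). e \<in> in_arcs U v \<and> d \<in> arcs (Es e) \<and> te e d = b} = 2"
    if "b \<in> arcs (Vs v)" for b
    using gos v that unfolding two_covered_gos_def in_arcs_def by (auto simp: conj_assoc)
qed

theorem lemma4p2:
  assumes "two_covered_gos U Vs Es tv te"
  shows "euler_char (horizontal U Vs Es tv) \<le> euler_char U"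
proof -
  let ?H = "horizontal U Vs Es tv"
  have fU: "fin_graph U" using assms unfolding two_covered_gos_def by simp
  have "card (verts ?H) = (\<Sum>v\<in>verts U. card (verts (Vs v)))"
    using fU assms unfolding horizontal_def two_covered_gos_def fin_graph_def by simp
  moreover have "card (arcs ?H) = (\<Sum>v\<in>verts U. \<Sum>e\<in>in_arcs U v. card (verts (Es e)))"
    using fU assms unfolding horizontal_def two_covered_gos_def fin_graph_def
    by (simp add: sum_arcs_by_tgt[OF fU])
  moreover have "card (arcs U) = (\<Sum>v\<in>verts U. card (in_arcs U v))"
    using sum_arcs_by_tgt[OF fU, of "\<lambda>_. 1::nat"] by simp
  ultimately have "2 * euler_char ?H =
      (\<Sum>v\<in>verts U. 2 * int (card (verts (Vs v)))
                       - (\<Sum>e\<in>in_arcs U v. int (card (verts (Es e)))))"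
    and "2 * euler_char U = (\<Sum>v\<in>verts U. 2 - int (card (in_arcs U v)))"
    using euler_char_double[OF fin_graph_horizontal[OF assms]] euler_char_double[OF fU]
    by (simp_all add: sum_subtractf sum_distrib_left)
  moreover have
    "(\<Sum>v\<in>verts U. 2 * int (card (verts (Vs v)))
                    - (\<Sum>e\<in>in_arcs U v. int (card (verts (Es e)))))
      \<le> (\<Sum>v\<in>verts U. 2 - int (card (in_arcs U v)))"
    using two_covered_gos_vertex_bound[OF assms] by (rule sum_mono)
  ultimately show ?thesis by simp
qed

end
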